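(* If $n$ is a positive integer, then $$\sum_{k = 1}^n \sum_{j = 0}^{k - 1} ( - 1)^{n - j} \frac{( n - j - 1)!}{n - j + 1}\left\{ {n \atop n - j} \right\} = B_n .$$
   Context: $\left\{ {n \atop m} \right\}$ denotes the Stirling number of the second kind. $B_n$ are the Bernoulli numbers, defined by $\frac{t}{e^t-1}=\sum_{n\ge0}B_n\frac{t^n}{n!}$ (so $B_1=-1/2$). *)

theory Defs
  imports "HOL-Combinatorics.Stirling" "HOL-Computational_Algebra.Formal_Power_Series"
begin

text \<open>Bernoulli numbers via their exponential generating function
  t / (e^t - 1) = sum_n B_n t^n / n!, taken as a formal power series over the reals
  (so B_1 = -1/2).\<close>

definition bernoulli_gf :: "real fps" where
  "bernoulli_gf = fps_X / (fps_exp 1 - 1)"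

definition bernoulli :: "nat \<Rightarrow> real" where
  "bernoulli n = fact n * fps_nth bernoulli_gf n"

end

theory Submission
  imports Defs
begin

text \<open>Substituting \<open>u = e\<^sup>t - 1\<close> into \<open>ln (1 + u) / u = \<Sum>\<^sub>m (-1)\<^sup>m u\<^sup>m / (m + 1)\<close> gives
  \<open>t / (e\<^sup>t - 1)\<close>, and the \<open>n\<close>-th coefficient of \<open>(e\<^sup>t - 1)\<^sup>m\<close> is \<open>m! S(n, m) / n!\<close>;
  hence \<open>B\<^sub>n = \<Sum>\<^sub>m (-1)\<^sup>m m! S(n, m) / (m + 1)\<close>. In the double sum the \<open>j\<close>-th inner term
  occurs \<open>n - j\<close> times, and \<open>(n - j) (n - j - 1)! = (n - j)!\<close> turns it into this formula.\<close>

unbundle fps_syntax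

lemma fps_exp_minus_one_power_nth:
  "((fps_exp (1::'a::field_char_0) - 1) ^ m) $ n = fact m * of_nat (Stirling n m) / fact n"
proof (induction n arbitrary: m)
  case 0
  then show ?case by (cases m) simp_all
next
  case (Suc n)
  let ?U = "fps_exp (1::'a) - 1"
  show ?case
  proof (cases m)
    case 0
    then show ?thesis by simp
  next
    case (Suc k)
    have "fps_deriv ?U = 1 + ?U" by simp
    then have "fps_deriv (?U ^ Suc k) = of_nat (Suc k) * (?U ^ k + ?U ^ Suc k)"
      by (simp only: fps_deriv_power' diff_Suc_1) (simp add: algebra_simps)
    then have "of_nat (Suc n) * (?U ^ Suc k) $ Suc n = of_nat (Suc k) * ((?U ^ k) $ n + (?U ^ Suc k) $ n)"
      by (metis fps_deriv_nth fps_mult_left_const_nth fps_of_nat fps_add_nth Suc_eq_plus1)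
    then have "(?U ^ Suc k) $ Suc n = of_nat (Suc k) * ((?U ^ k) $ n + (?U ^ Suc k) $ n) / of_nat (Suc n)"
      by (simp add: field_simps del: of_nat_Suc)
    then show ?thesis
      unfolding Suc.IH \<open>m = Suc k\<close> by (simp add: field_simps)
  qed
qed

lemma fps_ln_eq_X_mult:
  "fps_ln (c::'a::field_char_0) = fps_X * Abs_fps (\<lambda>m. (-1) ^ m / (of_nat (Suc m) * c))"
  by (rule fps_ext) (simp add: fps_ln_nth)

lemma fps_X_div_exp_minus_one:
  "fps_X / (fps_exp (1::'a::field_char_0) - 1) = Abs_fps (\<lambda>m. (-1) ^ m / of_nat (Suc m)) oo (fps_exp 1 - 1)"
proof -
  let ?U = "fps_exp (1::'a) - 1"
  have "?U $ 1 \<noteq> 0" by simp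
  then have "?U \<noteq> 0" by force
  have "fps_X = fps_ln 1 oo ?U"
    by (simp add: fps_ln_fps_exp_inv fps_inv)
  also have "\<dots> = ?U * (Abs_fps (\<lambda>m. (-1) ^ m / of_nat (Suc m)) oo ?U)"
    unfolding fps_ln_eq_X_mult by (simp add: fps_compose_mult_distrib)
  finally show ?thesis
    using \<open>?U \<noteq> 0\<close> by (metis nonzero_mult_div_cancel_left)
qed

lemma bernoulli_Stirling:
  "bernoulli n = (\<Sum>m = 0..n. (-1) ^ m * fact m / real (Suc m) * real (Stirling n m))"
  unfolding bernoulli_def bernoulli_gf_def fps_X_div_exp_minus_one fps_compose_nth
    fps_exp_minus_one_power_nth sum_distrib_left
  by (rule sum.cong) simp_all

lemma sum_partial_sums:
  fixes a :: "nat \<Rightarrow> 'a::comm_semiring_1"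
  shows "(\<Sum>k = 1..n. \<Sum>j = 0..k - 1. a j) = (\<Sum>j = 0..n. of_nat (n - j) * a j)"
proof (induction n)
  case 0
  then show ?case by simp
next
  case (Suc n)
  have "(\<Sum>j = 0..Suc n. of_nat (Suc n - j) * a j) = (\<Sum>j = 0..n. of_nat (Suc n - j) * a j)"
    by simp
  also have "\<dots> = (\<Sum>j = 0..n. of_nat (n - j) * a j + a j)"
    by (rule sum.cong) (auto simp: Suc_diff_le algebra_simps)
  finally show ?case
    using Suc.IH by (simp add: sum.distrib)
qed

theorem proposition6:
  fixes n :: nat
  assumes "n \<ge> 1"
  shows "(\<Sum>k = 1..n. \<Sum>j = 0..k - 1.
            (-1) ^ (n - j) * fact (n - j - 1) / real (n - j + 1) * real (Stirling n (n - j)))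
         = bernoulli n"
proof -
  define b where "b m = (-1) ^ m * fact m / real (Suc m) * real (Stirling n m)" for m
  have term_eq: "real m * ((-1) ^ m * fact (m - 1) / real (m + 1) * real (Stirling n m)) = b m" for m
  proof (cases m)
    case 0
    then show ?thesis using assms by (cases n) (simp_all add: b_def)
  next
    case (Suc p)
    then show ?thesis by (simp add: b_def field_simps)
  qed
  have "(\<Sum>k = 1..n. \<Sum>j = 0..k - 1.
            (-1) ^ (n - j) * fact (n - j - 1) / real (n - j + 1) * real (Stirling n (n - j)))
      = (\<Sum>j = 0..n. b (n - j))"
    unfolding sum_partial_sums term_eq ..
  also have "\<dots> = (\<Sum>m = 0..n. b m)"
    by (subst sum.atLeastAtMost_rev) simp
  finally show ?thesis
    unfolding b_def bernoulli_Stirling .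
qed

end
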